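(* Let $\eta(v,w)=v^0w^0-v^1w^1-\dots-v^nw^n$ on $\mathbb{R}^{n+1}$ and let $h$ be a symmetric bilinear form on $\mathbb{R}^{n+1}$ of Lorentzian signature $(+,-,\dots,-)$. Let $C_h$ be one of the two connected components of $\{v: h(v,v)>0\}$ and set $$\mathcal{T}=\{v\in\mathbb{R}^{n+1}: \eta(v,v)>0,\ v^0>0\}\cap C_h,$$ assumed nonempty. Define $F:\mathcal{T}\to(0,\infty)$ by $F(v)=[\eta(v,v)\,h(v,v)]^{1/4}$. Then for all $v,w\in\mathcal{T}$, $$\frac12\left(\frac{\eta(w,v)}{\eta(v,v)}+\frac{h(w,v)}{h(v,v)}\right)\ge\frac{F(w)}{F(v)}.$$ *)

theory Defs
  imports "HOL-Analysis.Analysis"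
begin

text \<open>Minkowski form on R^(n+1), realised as real^'n with a distinguished
  time index t0 (so n+1 = CARD('n)):
  eta v w = v_t0 w_t0 - sum over the other coordinates.\<close>
definition minkowski :: "'n::finite \<Rightarrow> real^'n \<Rightarrow> real^'n \<Rightarrow> real" where
  "minkowski t0 v w = v$t0 * w$t0 - (\<Sum>i\<in>UNIV - {t0}. v$i * w$i)"

text \<open>A symmetric bilinear form has Lorentzian signature (+,-,...,-) iff it is
  congruent to the Minkowski form, i.e. diagonal diag(1,-1,...,-1) in some basis.\<close>
definition lorentzian_form :: "'n::finite \<Rightarrow> (real^'n \<Rightarrow> real^'n \<Rightarrow> real) \<Rightarrow> bool" where
  "lorentzian_form t0 h \<longleftrightarrow> bilinear h \<and> (\<forall>v w. h v w = h w v) \<and>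
     (\<exists>A::real^'n^'n. invertible A \<and> (\<forall>v w. h v w = minkowski t0 (A *v v) (A *v w)))"

end

theory Submission imports Defs begin

text \<open>Both quotients are bounded below by a reverse Cauchy--Schwarz inequality:
  \<open>\<eta>(w,v) \<ge> \<surd>(\<eta>(v,v) \<eta>(w,w))\<close> for future-directed \<open>\<eta>\<close>-timelike vectors, and likewise
  \<open>h(w,v) \<ge> \<surd>(h(v,v) h(w,w))\<close> for \<open>v, w\<close> in one timelike component of \<open>h\<close>; the latter
  follows from the former after the change of basis that turns \<open>h\<close> into \<open>\<eta>\<close>, because
  the time coordinate of the new basis cannot change sign on a connected set of
  timelike vectors. The arithmetic--geometric mean inequality applied to the two lower
  bounds \<open>\<surd>(\<eta>(w,w)/\<eta>(v,v))\<close> and \<open>\<surd>(h(w,w)/h(v,v))\<close> then yields \<open>F(w)/F(v)\<close>.\<close>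

lemma sqrt_diff_squares_mult_le:
  fixes a b c d s :: real
  assumes "0 \<le> b" "0 \<le> d" "b < a" "d < c" "s \<le> b * d"
  shows "sqrt ((a\<^sup>2 - b\<^sup>2) * (c\<^sup>2 - d\<^sup>2)) \<le> a * c - s"
proof -
  have "b * d \<le> a * c" using assms by (simp add: mult_mono)
  have "(a * c - b * d)\<^sup>2 - (a\<^sup>2 - b\<^sup>2) * (c\<^sup>2 - d\<^sup>2) = (a * d - b * c)\<^sup>2" by algebra
  then have "(a\<^sup>2 - b\<^sup>2) * (c\<^sup>2 - d\<^sup>2) \<le> (a * c - b * d)\<^sup>2"
    by (metis diff_ge_0_iff_ge zero_le_power2)
  with \<open>b * d \<le> a * c\<close> have "sqrt ((a\<^sup>2 - b\<^sup>2) * (c\<^sup>2 - d\<^sup>2)) \<le> a * c - b * d"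
    by (simp add: real_le_lsqrt)
  with assms show ?thesis by linarith
qed

lemma minkowski_commute: "minkowski t0 x y = minkowski t0 y x"
  by (simp add: minkowski_def mult.commute)

lemma minkowski_uminus: "minkowski t0 (- x) (- y) = minkowski t0 x y"
  by (simp add: minkowski_def)

lemma minkowski_self_eq: "minkowski t0 x x = (x$t0)\<^sup>2 - (\<Sum>i\<in>UNIV - {t0}. (x$i)\<^sup>2)"
  by (simp add: minkowski_def power2_eq_square)

lemma minkowski_timelike_time_nonzero:
  assumes "minkowski t0 x x > 0"
  shows "x$t0 \<noteq> 0"
proof
  assume "x$t0 = 0"
  then have "minkowski t0 x x \<le> 0"
    by (simp add: minkowski_self_eq sum_nonneg)
  with assms show False by simp
qed

lemma minkowski_reverse_Cauchy_Schwarz: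
  assumes "minkowski t0 x x > 0" "minkowski t0 y y > 0" "x$t0 > 0" "y$t0 > 0"
  shows "sqrt (minkowski t0 x x * minkowski t0 y y) \<le> minkowski t0 x y"
proof -
  define I where "I = UNIV - {t0}"
  define p where "p = sqrt (\<Sum>i\<in>I. (x$i)\<^sup>2)"
  define q where "q = sqrt (\<Sum>i\<in>I. (y$i)\<^sup>2)"
  define s where "s = (\<Sum>i\<in>I. x$i * y$i)"
  have "p \<ge> 0" "q \<ge> 0" unfolding p_def q_def by (simp_all add: sum_nonneg)
  have "s \<le> sqrt (s\<^sup>2)" by simp
  also have "\<dots> \<le> p * q"
    unfolding p_def q_def s_def real_sqrt_mult[symmetric]
    by (intro real_sqrt_le_mono Cauchy_Schwarz_ineq_sum)
  finally have "s \<le> p * q" .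
  have xx: "minkowski t0 x x = (x$t0)\<^sup>2 - p\<^sup>2"
    by (simp add: minkowski_self_eq p_def I_def sum_nonneg)
  have yy: "minkowski t0 y y = (y$t0)\<^sup>2 - q\<^sup>2"
    by (simp add: minkowski_self_eq q_def I_def sum_nonneg)
  have xy: "minkowski t0 x y = x$t0 * y$t0 - s"
    by (simp add: minkowski_def s_def I_def)
  have "p < x$t0" using assms(1,3) \<open>p \<ge> 0\<close> unfolding xx
    by (simp add: power_less_imp_less_base)
  moreover have "q < y$t0" using assms(2,4) \<open>q \<ge> 0\<close> unfolding yy
    by (simp add: power_less_imp_less_base)
  ultimately show ?thesis unfolding xx yy xy
    using \<open>p \<ge> 0\<close> \<open>q \<ge> 0\<close> \<open>s \<le> p * q\<close> by (rule_tac sqrt_diff_squares_mult_le) auto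
qed

lemma connected_nonvanishing_same_sign:
  fixes f :: "'a::topological_space \<Rightarrow> real"
  assumes "connected S" "continuous_on S f" "\<And>u. u \<in> S \<Longrightarrow> f u \<noteq> 0"
    and "v \<in> S" "w \<in> S"
  shows "f v * f w > 0"
proof (rule ccontr)
  assume "\<not> f v * f w > 0"
  with assms(3-5) have "min (f v) (f w) \<le> 0" "0 \<le> max (f v) (f w)"
    by (auto simp: zero_less_mult_iff min_def max_def)
  moreover have "connected (f ` S)"
    using assms(2,1) by (rule connected_continuous_image)
  ultimately have "0 \<in> f ` S" using assms(4,5) unfolding connected_iff_interval
    by (cases "f v \<le> f w") (auto simp: min_def max_def)
  with assms(3) show False by auto
qed

lemma lorentzian_reverse_Cauchy_Schwarz:
  fixes t0 :: "'n::finite" and h :: "real^'n \<Rightarrow> real^'n \<Rightarrow> real"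
  assumes "lorentzian_form t0 h" "connected C" "C \<subseteq> {u. h u u > 0}"
    and "v \<in> C" "w \<in> C"
  shows "sqrt (h v v * h w w) \<le> h v w"
proof -
  obtain A :: "real^'n^'n" where hA: "\<And>x y. h x y = minkowski t0 (A *v x) (A *v y)"
    using assms(1) unfolding lorentzian_form_def by blast
  define g where "g u = (A *v u)$t0" for u
  have "continuous_on C g" unfolding g_def
    by (intro continuous_intros linear_continuous_on) (auto intro: bounded_linear_compose)
  moreover have "g u \<noteq> 0" if "u \<in> C" for u
    using assms(3) that minkowski_timelike_time_nonzero hA unfolding g_def by fastforce
  ultimately have same_sign: "g v * g w > 0"
    using connected_nonvanishing_same_sign[OF assms(2)] assms(4,5) by blast
  have "h v v > 0" "h w w > 0" using assms(3-5) by auto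
  show ?thesis
  proof (cases "g v > 0")
    case True
    with same_sign have "g w > 0" by (simp add: zero_less_mult_iff)
    with True \<open>h v v > 0\<close> \<open>h w w > 0\<close> show ?thesis
      unfolding hA g_def by (intro minkowski_reverse_Cauchy_Schwarz)
  next
    case False
    with same_sign have "g v < 0" "g w < 0" by (auto simp: zero_less_mult_iff)
    with \<open>h v v > 0\<close> \<open>h w w > 0\<close> show ?thesis
      using minkowski_reverse_Cauchy_Schwarz[of t0 "- (A *v v)" "- (A *v w)"]
      unfolding hA g_def minkowski_uminus by simp
  qed
qed

lemma mean_of_ratios_ge_quartic_root:
  fixes p q r s a c :: real
  assumes "p > 0" "q > 0" "r > 0" "s > 0"
    and "sqrt (p * q) \<le> a" "sqrt (r * s) \<le> c"
  shows "(q * s) powr (1/4) / (p * r) powr (1/4) \<le> (1/2) * (a/p + c/r)"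
proof -
  define x where "x = sqrt (q/p)"
  define y where "y = sqrt (s/r)"
  have "x = sqrt (p * q) / p"
    using assms(1,2) by (simp add: x_def real_sqrt_mult real_sqrt_divide field_simps)
  with assms(1,5) have "x \<le> a/p" by (simp add: divide_right_mono)
  have "y = sqrt (r * s) / r"
    using assms(3,4) by (simp add: y_def real_sqrt_mult real_sqrt_divide field_simps)
  with assms(3,6) have "y \<le> c/r" by (simp add: divide_right_mono)
  have "(q * s) powr (1/4) / (p * r) powr (1/4) = ((q * s)/(p * r)) powr (1/4)"
    using assms by (simp add: powr_divide)
  also have "\<dots> = sqrt (sqrt ((q * s)/(p * r)))"
    using assms by (simp add: powr_half_sqrt[symmetric] powr_powr)
  also have "\<dots> = sqrt (x * y)"
    by (simp add: x_def y_def real_sqrt_mult[symmetric])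
  also have "\<dots> \<le> (x + y)/2"
    by (rule arith_geo_mean_sqrt) (simp_all add: x_def y_def assms less_imp_le)
  also have "\<dots> \<le> (a/p + c/r)/2"
    using \<open>x \<le> a/p\<close> \<open>y \<le> c/r\<close> by (intro divide_right_mono add_mono) simp_all
  finally show ?thesis by simp
qed

theorem mainTheorem9:
  fixes t0 :: "'n::finite"
    and h :: "real^'n \<Rightarrow> real^'n \<Rightarrow> real"
    and x0 v w :: "real^'n"
  assumes hL: "lorentzian_form t0 h"
    and x0: "h x0 x0 > 0"
    and Tdef: "T = {u. minkowski t0 u u > 0 \<and> u$t0 > 0} \<inter> connected_component_set {u. h u u > 0} x0"
    and Tne: "T \<noteq> {}"
    and Fdef: "F = (\<lambda>u. (minkowski t0 u u * h u u) powr (1/4))"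
    and v: "v \<in> T" and w: "w \<in> T"
  shows "(1/2) * (minkowski t0 w v / minkowski t0 v v + h w v / h v v) \<ge> F w / F v"
proof -
  define C where "C = connected_component_set {u. h u u > 0} x0"
  have C: "connected C" "C \<subseteq> {u. h u u > 0}"
    unfolding C_def by (simp_all add: connected_component_subset)
  have "v \<in> C" "w \<in> C" and \<eta>: "minkowski t0 v v > 0" "minkowski t0 w w > 0" "v$t0 > 0" "w$t0 > 0"
    using v w Tdef C_def by auto
  with C have "h v v > 0" "h w w > 0" by auto
  have "sqrt (minkowski t0 v v * minkowski t0 w w) \<le> minkowski t0 w v"
    using minkowski_reverse_Cauchy_Schwarz[OF \<eta>] by (simp add: minkowski_commute)
  moreover have "sqrt (h v v * h w w) \<le> h w v"
    using lorentzian_reverse_Cauchy_Schwarz[OF hL C \<open>w \<in> C\<close> \<open>v \<in> C\<close>]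
    by (simp add: mult.commute)
  ultimately show ?thesis
    using mean_of_ratios_ge_quartic_root \<eta> \<open>h v v > 0\<close> \<open>h w w > 0\<close> unfolding Fdef by simp
qed

end
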